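(* Let $H$ be a multigraph of even order $p\ge 4$ and let $d\ge 2$ be an integer. Suppose there is a vertex $s$ with $\deg(s)\le d$, every other vertex has degree $d$ or $d+1$, and exactly $r \le d$ vertices have degree $d+1$. Suppose there exists $R \subsetneq V(H)\setminus\{s\}$ with $|R|$ odd, $|R|\ge 3$, $|\partial_H(R)| \le d$ and $\operatorname{sl}(\langle R\rangle, d) \le \operatorname{sl}(H-s, d)$. If $\Gamma(H)\le d+1$, then there is a subset $S\subseteq V(H)$ with $|S|$ odd and $1<|S|<p-1$ such that $\Delta(H_S)\le d+1$, $\Gamma(H_S)\le d+1$, and $H_S$ has at most $r$ vertices of degree $d+1$; and similarly $\Delta(H_{S^c})\le d+1$, $\Gamma(H_{S^c})\le d+1$, and $H_{S^c}$ has at most $r$ vertices of degree $d+1$, where $S^c=V(H)\setminus S$.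
   Context: Multigraphs are finite and loopless, multiple edges allowed. For $S \subseteq V(H)$, $\langle S\rangle$ is the induced subgraph and $\partial_H(S)$ is the set of edges of $H$ with exactly one end in $S$. For a multigraph $K$ of odd order $n(K)\ge 3$ with $e(K)$ edges, $t(K) = 2e(K)/(n(K)-1)$, and the $k$-slack is $\operatorname{sl}(K,k) = (k+1)(n(K)-1)/2 - e(K)$. $\Gamma(H) = \max\{t(\langle R\rangle) : R\subseteq V(H), |R| \text{ odd}, |R|\ge 3\}$. Shrinking: for a nonempty proper subset $S$ of $V(H)$, $H_S$ has vertex set $(V(H)\setminus S)\cup\{s'\}$ for a new vertex $s'$; its edges are the edges of $H - S$ together with, for each $u \notin S$, exactly as many edges $us'$ as there are edges of $H$ joining $u$ to vertices of $S$. *)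

theory Defs
  imports Complex_Main
begin

text \<open>A finite loopless multigraph on vertex set V, given by a symmetric
  edge-multiplicity function m (m u v = number of edges joining u and v).\<close>
definition multigraph :: "'a set \<Rightarrow> ('a \<Rightarrow> 'a \<Rightarrow> nat) \<Rightarrow> bool" where
  "multigraph V m \<longleftrightarrow> finite V \<and> (\<forall>u v. m u v = m v u) \<and> (\<forall>v. m v v = 0)
     \<and> (\<forall>u v. m u v \<noteq> 0 \<longrightarrow> u \<in> V \<and> v \<in> V)"

definition deg :: "'a set \<Rightarrow> ('a \<Rightarrow> 'a \<Rightarrow> nat) \<Rightarrow> 'a \<Rightarrow> nat" where
  "deg V m v = (\<Sum>u\<in>V. m v u)"

definition maxdeg :: "'a set \<Rightarrow> ('a \<Rightarrow> 'a \<Rightarrow> nat) \<Rightarrow> nat" where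
  "maxdeg V m = Max ((deg V m) ` V)"

text \<open>Number of edges of the induced subgraph on R (each edge counted once;
  the double sum counts every edge twice since m is symmetric and loopless).\<close>
definition edges_in :: "('a \<Rightarrow> 'a \<Rightarrow> nat) \<Rightarrow> 'a set \<Rightarrow> nat" where
  "edges_in m R = (\<Sum>u\<in>R. \<Sum>v\<in>R. m u v) div 2"

definition cut_size :: "'a set \<Rightarrow> ('a \<Rightarrow> 'a \<Rightarrow> nat) \<Rightarrow> 'a set \<Rightarrow> nat" where
  "cut_size V m R = (\<Sum>u\<in>R. \<Sum>v\<in>V - R. m u v)"

definition tval :: "('a \<Rightarrow> 'a \<Rightarrow> nat) \<Rightarrow> 'a set \<Rightarrow> real" where
  "tval m R = 2 * real (edges_in m R) / (real (card R) - 1)"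

definition slack :: "('a \<Rightarrow> 'a \<Rightarrow> nat) \<Rightarrow> 'a set \<Rightarrow> nat \<Rightarrow> real" where
  "slack m R k = (real k + 1) * (real (card R) - 1) / 2 - real (edges_in m R)"

definition Gamma :: "'a set \<Rightarrow> ('a \<Rightarrow> 'a \<Rightarrow> nat) \<Rightarrow> real" where
  "Gamma V m = Max {tval m R | R. R \<subseteq> V \<and> odd (card R) \<and> card R \<ge> 3}"

text \<open>Shrinking S to a new vertex: the new vertex is None, old vertices u are Some u.\<close>
definition shrink_V :: "'a set \<Rightarrow> 'a set \<Rightarrow> 'a option set" where
  "shrink_V V S = Some ` (V - S) \<union> {None}"

definition shrink_m :: "('a \<Rightarrow> 'a \<Rightarrow> nat) \<Rightarrow> 'a set \<Rightarrow> 'a option \<Rightarrow> 'a option \<Rightarrow> nat" where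
  "shrink_m m S x y = (case (x, y) of
      (Some u, Some v) \<Rightarrow> (if u \<in> S \<or> v \<in> S then 0 else m u v)
    | (Some u, None) \<Rightarrow> (if u \<in> S then 0 else (\<Sum>w\<in>S. m u w))
    | (None, Some v) \<Rightarrow> (if v \<in> S then 0 else (\<Sum>w\<in>S. m v w))
    | (None, None) \<Rightarrow> 0)"

definition num_deg :: "'a set \<Rightarrow> ('a \<Rightarrow> 'a \<Rightarrow> nat) \<Rightarrow> nat \<Rightarrow> nat" where
  "num_deg V m k = card {v \<in> V. deg V m v = k}"

end

theory Submission
  imports Defs
begin

text \<open>Among the odd sets \<open>S \<subset> V - {s}\<close> with \<open>|S| \<ge> 3\<close>, \<open>|\<partial>(S)| \<le> d\<close> and
  \<open>sl(\<langle>S\<rangle>, d) \<le> sl(H - s, d)\<close> (the given \<open>R\<close> is one) choose one with the smallest cut.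
  Shrinking either side creates a single new vertex, of degree \<open>|\<partial>(S)| \<le> d\<close>, and keeps all
  other degrees, so only odd sets through the new vertex can violate \<open>\<Gamma> \<le> d + 1\<close>. Such a set
  is \<open>T \<union> {s'}\<close> with \<open>T\<close> even; if it were too dense then, as the vertices of \<open>T\<close> have degree
  at most \<open>d + 1\<close>, \<open>T\<close> would send more edges to the shrunk side than elsewhere, and \<open>T \<union> S\<close>,
  \<open>S - T\<close> or (when \<open>s \<in> T\<close>) \<open>V - S - T\<close> would be such a set with a smaller cut.\<close>

definition edges_between :: "('a \<Rightarrow> 'a \<Rightarrow> nat) \<Rightarrow> 'a set \<Rightarrow> 'a set \<Rightarrow> nat" where
  "edges_between m A B = (\<Sum>u\<in>A. \<Sum>v\<in>B. m u v)"

lemma multigraph_sym: "multigraph V m \<Longrightarrow> \<forall>u v. m u v = m v u"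
  by (simp add: multigraph_def)

lemma multigraph_loopless: "multigraph V m \<Longrightarrow> m v v = 0"
  by (simp add: multigraph_def)

lemma multigraph_finite: "multigraph V m \<Longrightarrow> finite V"
  by (simp add: multigraph_def)

lemma edges_between_commute:
  assumes "\<forall>u v. m u v = m v u"
  shows "edges_between m A B = edges_between m B A"
  unfolding edges_between_def by (subst sum.swap) (simp add: assms)

lemma edges_between_Un_left:
  "finite A \<Longrightarrow> finite B \<Longrightarrow> A \<inter> B = {} \<Longrightarrow>
    edges_between m (A \<union> B) C = edges_between m A C + edges_between m B C"
  unfolding edges_between_def by (simp add: sum.union_disjoint)

lemma edges_between_Un_right:
  "finite B \<Longrightarrow> finite C \<Longrightarrow> B \<inter> C = {} \<Longrightarrow>
    edges_between m A (B \<union> C) = edges_between m A B + edges_between m A C"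
  unfolding edges_between_def by (simp add: sum.union_disjoint sum.distrib)

lemma edges_between_Un_self:
  assumes "\<forall>u v. m u v = m v u" "finite A" "finite B" "A \<inter> B = {}"
  shows "edges_between m (A \<union> B) (A \<union> B)
    = edges_between m A A + edges_between m B B + 2 * edges_between m A B"
  using assms edges_between_commute[of m B A]
  by (simp add: edges_between_Un_left edges_between_Un_right)

lemma edges_between_self:
  assumes "multigraph V m" "finite X"
  shows "edges_between m X X = 2 * edges_in m X"
proof -
  have "even (edges_between m X X)"
    using assms(2)
  proof (induction X rule: finite_induct)
    case empty
    then show ?case by (simp add: edges_between_def)
  next
    case (insert a X)
    then show ?case
      using edges_between_Un_self[of m "{a}" X] multigraph_sym[OF assms(1)]
        multigraph_loopless[OF assms(1)]
      by (simp add: edges_between_def)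
  qed
  then show ?thesis
    unfolding edges_in_def edges_between_def by simp
qed

lemma slack_le_slack_iff:
  assumes "multigraph V m" "finite A" "finite B"
  shows "slack m A k \<le> slack m B k \<longleftrightarrow>
    (k + 1) * card A + edges_between m B B \<le> (k + 1) * card B + edges_between m A A"
proof -
  have "slack m A k \<le> slack m B k \<longleftrightarrow>
      real ((k + 1) * card A + edges_between m B B) \<le> real ((k + 1) * card B + edges_between m A A)"
    unfolding slack_def using assms by (simp add: edges_between_self field_simps) argo
  then show ?thesis by (simp only: of_nat_le_iff)
qed

lemma cut_size_eq_edges_between: "cut_size V m X = edges_between m X (V - X)"
  unfolding cut_size_def edges_between_def ..

lemma cut_size_complement:
  assumes "multigraph V m" "X \<subseteq> V"
  shows "cut_size V m (V - X) = cut_size V m X"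
proof -
  have "V - (V - X) = X" using assms(2) by auto
  then show ?thesis
    unfolding cut_size_eq_edges_between
    using edges_between_commute[OF multigraph_sym[OF assms(1)]] by metis
qed

lemma cut_size_singleton:
  assumes "multigraph V m" "w \<in> V"
  shows "cut_size V m {w} = deg V m w"
  using assms multigraph_finite[OF assms(1)] multigraph_loopless[OF assms(1)]
  by (simp add: cut_size_def deg_def sum.remove)

lemma sum_deg_eq:
  assumes "multigraph V m" "X \<subseteq> V"
  shows "(\<Sum>u\<in>X. deg V m u) = edges_between m X X + cut_size V m X"
proof -
  have "finite V" using multigraph_finite[OF assms(1)] .
  have "(\<Sum>u\<in>X. deg V m u) = edges_between m X (X \<union> (V - X))"
    unfolding deg_def edges_between_def using assms(2) by (simp add: Un_absorb1)
  also have "\<dots> = edges_between m X X + cut_size V m X"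
    unfolding cut_size_eq_edges_between
    using \<open>finite V\<close> assms(2) by (intro edges_between_Un_right) (auto intro: finite_subset)
  finally show ?thesis .
qed

lemma cut_size_partition:
  assumes mg: "multigraph V m"
    and part: "A \<inter> B = {}" "A \<inter> C = {}" "B \<inter> C = {}" "A \<union> B \<union> C = V"
  shows "cut_size V m B = edges_between m A B + edges_between m B C"
    and "cut_size V m C = edges_between m A C + edges_between m B C"
    and "cut_size V m (A \<union> B) = edges_between m A C + edges_between m B C"
    and "(\<Sum>u\<in>A. deg V m u) = edges_between m A A + edges_between m A B + edges_between m A C"
proof -
  have fin: "finite A" "finite B" "finite C"
    using multigraph_finite[OF mg] part(4) by (auto intro: finite_subset)
  have comm: "edges_between m X Y = edges_between m Y X" for X Y
    using edges_between_commute[OF multigraph_sym[OF mg]] .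
  have compl: "V - A = B \<union> C" "V - B = A \<union> C" "V - C = A \<union> B" "V - (A \<union> B) = C"
    using part by auto
  have "cut_size V m A = edges_between m A B + edges_between m A C"
    unfolding cut_size_eq_edges_between compl(1) using fin(2,3) part(3)
    by (rule edges_between_Un_right)
  moreover have "A \<subseteq> V" using part(4) by blast
  ultimately show "(\<Sum>u\<in>A. deg V m u) = edges_between m A A + edges_between m A B + edges_between m A C"
    using sum_deg_eq[OF mg] by simp
  have "cut_size V m B = edges_between m B A + edges_between m B C"
    unfolding cut_size_eq_edges_between compl(2) using fin(1,3) part(2)
    by (rule edges_between_Un_right)
  then show "cut_size V m B = edges_between m A B + edges_between m B C"
    using comm[of B A] by simp
  have "cut_size V m C = edges_between m C A + edges_between m C B"
    unfolding cut_size_eq_edges_between compl(3) using fin(1,2) part(1)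
    by (rule edges_between_Un_right)
  then show "cut_size V m C = edges_between m A C + edges_between m B C"
    using comm[of C A] comm[of C B] by simp
  show "cut_size V m (A \<union> B) = edges_between m A C + edges_between m B C"
    unfolding cut_size_eq_edges_between compl(4) using fin(1,2) part(1)
    by (rule edges_between_Un_left)
qed

lemma tval_le_of_edges_between_le:
  assumes "edges_between m T T \<le> k * (card T - 1)" "2 \<le> card T"
  shows "tval m T \<le> real k"
proof -
  have "2 * edges_in m T \<le> k * (card T - 1)"
    using assms(1) unfolding edges_in_def edges_between_def by linarith
  then have "real (2 * edges_in m T) \<le> real (k * (card T - 1))"
    by (simp only: of_nat_le_iff)
  then have "2 * real (edges_in m T) \<le> real k * (real (card T) - 1)"
    using assms(2) by (simp add: of_nat_diff)
  moreover have "real (card T) - 1 > 0" using assms(2) by simp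
  ultimately show ?thesis
    unfolding tval_def by (simp add: divide_le_eq)
qed

lemma finite_odd_tvals:
  "finite V \<Longrightarrow> finite {tval m R | R. R \<subseteq> V \<and> odd (card R) \<and> card R \<ge> 3}"
  by (rule finite_subset[of _ "tval m ` Pow V"]) auto

lemma tval_le_Gamma:
  assumes "finite V" "R \<subseteq> V" "odd (card R)" "3 \<le> card R"
  shows "tval m R \<le> Gamma V m"
  unfolding Gamma_def using assms finite_odd_tvals[OF assms(1)] by (intro Max_ge) auto

lemma Gamma_le:
  assumes "finite V" "3 \<le> card V"
    and "\<And>R. R \<subseteq> V \<Longrightarrow> odd (card R) \<Longrightarrow> 3 \<le> card R \<Longrightarrow> tval m R \<le> c"
  shows "Gamma V m \<le> c"
proof -
  obtain R where "R \<subseteq> V" "card R = 3"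
    using obtain_subset_with_card_n[of 3 V] assms(2) by blast
  then show ?thesis
    unfolding Gamma_def using assms finite_odd_tvals[OF assms(1)]
    by (intro Max.boundedI) auto
qed

lemma shrink_V_eq: "shrink_V V X = insert None (Some ` (V - X))"
  unfolding shrink_V_def by auto

lemma shrink_m_sym:
  assumes "\<forall>u v. m u v = m v u"
  shows "\<forall>x y. shrink_m m X x y = shrink_m m X y x"
  using assms by (auto simp: shrink_m_def split: option.split)

lemma deg_shrink_Some:
  assumes mg: "multigraph V m" and X: "X \<subseteq> V" and u: "u \<in> V - X"
  shows "deg (shrink_V V X) (shrink_m m X) (Some u) = deg V m u"
proof -
  have fin: "finite V" using multigraph_finite[OF mg] .
  have "deg (shrink_V V X) (shrink_m m X) (Some u)
      = shrink_m m X (Some u) None + (\<Sum>v\<in>V - X. shrink_m m X (Some u) (Some v))"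
    unfolding deg_def shrink_V_eq using fin by (simp add: sum.reindex)
  also have "\<dots> = (\<Sum>w\<in>X. m u w) + (\<Sum>v\<in>V - X. m u v)"
    using u by (simp add: shrink_m_def)
  also have "\<dots> = deg V m u"
    unfolding deg_def using sum.subset_diff[OF X fin, of "m u"] by simp
  finally show ?thesis .
qed

lemma deg_shrink_None:
  assumes mg: "multigraph V m" and X: "X \<subseteq> V"
  shows "deg (shrink_V V X) (shrink_m m X) None = cut_size V m X"
proof -
  have "deg (shrink_V V X) (shrink_m m X) None = (\<Sum>v\<in>V - X. \<Sum>w\<in>X. m v w)"
    unfolding deg_def shrink_V_eq using multigraph_finite[OF mg]
    by (simp add: sum.reindex shrink_m_def)
  also have "\<dots> = cut_size V m X"
    using edges_between_commute[OF multigraph_sym[OF mg], of "V - X" X]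
    unfolding cut_size_eq_edges_between edges_between_def .
  finally show ?thesis .
qed

lemma edges_between_shrink_Some:
  assumes "T \<subseteq> V - X"
  shows "edges_between (shrink_m m X) (Some ` T) (Some ` T) = edges_between m T T"
  unfolding edges_between_def using assms
  by (auto simp: sum.reindex shrink_m_def intro!: sum.cong)

lemma edges_between_shrink_insert_None:
  assumes mg: "multigraph V m" and T: "T \<subseteq> V - X"
  shows "edges_between (shrink_m m X) (insert None (Some ` T)) (insert None (Some ` T))
    = edges_between m T T + 2 * edges_between m T X"
proof -
  have fin: "finite T" using multigraph_finite[OF mg] T finite_subset by blast
  have "edges_between (shrink_m m X) ({None} \<union> Some ` T) ({None} \<union> Some ` T)
      = edges_between (shrink_m m X) {None} {None} + edges_between (shrink_m m X) (Some ` T) (Some ` T)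
        + 2 * edges_between (shrink_m m X) {None} (Some ` T)"
    using fin by (intro edges_between_Un_self shrink_m_sym multigraph_sym[OF mg]) auto
  also have "edges_between (shrink_m m X) {None} (Some ` T) = edges_between m T X"
    unfolding edges_between_def using T by (auto simp: sum.reindex shrink_m_def intro!: sum.cong)
  finally show ?thesis
    using edges_between_shrink_Some[OF T] by (simp add: edges_between_def shrink_m_def)
qed

lemma maxdeg_shrink_le:
  assumes mg: "multigraph V m" and X: "X \<subseteq> V"
    and "cut_size V m X \<le> k" and "\<And>v. v \<in> V \<Longrightarrow> deg V m v \<le> k"
  shows "maxdeg (shrink_V V X) (shrink_m m X) \<le> k"
  unfolding maxdeg_def using assms multigraph_finite[OF mg]
    deg_shrink_None[OF mg X] deg_shrink_Some[OF mg X]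
  by (intro Max.boundedI) (auto simp: shrink_V_eq)

lemma num_deg_shrink_le:
  assumes mg: "multigraph V m" and X: "X \<subseteq> V" and "cut_size V m X \<noteq> k"
  shows "num_deg (shrink_V V X) (shrink_m m X) k \<le> num_deg V m k"
proof -
  have fin: "finite V" using multigraph_finite[OF mg] .
  have "{v \<in> shrink_V V X. deg (shrink_V V X) (shrink_m m X) v = k} \<subseteq> Some ` {v \<in> V. deg V m v = k}"
    using assms deg_shrink_None[OF mg X] deg_shrink_Some[OF mg X] by (auto simp: shrink_V_eq)
  then have "num_deg (shrink_V V X) (shrink_m m X) k \<le> card (Some ` {v \<in> V. deg V m v = k})"
    unfolding num_deg_def using fin by (intro card_mono) auto
  also have "\<dots> = num_deg V m k"
    unfolding num_deg_def by (simp add: card_image)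
  finally show ?thesis .
qed

text \<open>Odd sets avoiding the new vertex are odd sets of \<open>H\<close>; those through it are \<open>T \<union> {s'}\<close>
  with \<open>T\<close> even, and for these \<open>t \<le> k\<close> is exactly the hypothesis \<open>sparse\<close>.\<close>

lemma tval_shrink_le:
  assumes mg: "multigraph V m" and X: "X \<subseteq> V" and Gamma: "Gamma V m \<le> real k"
    and sparse: "\<And>T. T \<subseteq> V - X \<Longrightarrow> even (card T) \<Longrightarrow>
      edges_between m T T + 2 * edges_between m T X \<le> k * card T"
    and R: "R \<subseteq> shrink_V V X" "odd (card R)" "3 \<le> card R"
  shows "tval (shrink_m m X) R \<le> real k"
proof -
  have fin: "finite V" using multigraph_finite[OF mg] .
  define T where "T = Some -` R"
  have T: "T \<subseteq> V - X" using R(1) unfolding T_def shrink_V_eq by auto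
  have Some_T: "Some ` T = R - {None}"
    unfolding T_def image_vimage_eq using notin_range_Some by blast
  show ?thesis
  proof (cases "None \<in> R")
    case True
    then have R_eq: "R = insert None (Some ` T)"
      using Some_T by auto
    have card_R: "card R = card T + 1"
      unfolding R_eq using T fin by (simp add: card_image finite_subset)
    have "edges_between (shrink_m m X) R R = edges_between m T T + 2 * edges_between m T X"
      unfolding R_eq by (rule edges_between_shrink_insert_None[OF mg T])
    also have "\<dots> \<le> k * (card R - 1)"
      using sparse[OF T] R(2) card_R by simp
    finally show ?thesis
      using R(3) by (intro tval_le_of_edges_between_le) auto
  next
    case False
    then have R_eq: "R = Some ` T"
      using Some_T by auto
    have card_R: "card R = card T"
      unfolding R_eq by (simp add: card_image)
    have "tval (shrink_m m X) R = tval m T"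
      unfolding tval_def edges_in_def card_R
      using edges_between_shrink_Some[OF T] unfolding R_eq edges_between_def by simp
    also have "\<dots> \<le> Gamma V m"
      using T R card_R fin by (intro tval_le_Gamma) auto
    finally show ?thesis using Gamma by simp
  qed
qed

lemma Gamma_shrink_le:
  assumes mg: "multigraph V m" and X: "X \<subseteq> V" and two: "2 \<le> card (V - X)"
    and Gamma: "Gamma V m \<le> real k"
    and sparse: "\<And>T. T \<subseteq> V - X \<Longrightarrow> even (card T) \<Longrightarrow>
      edges_between m T T + 2 * edges_between m T X \<le> k * card T"
  shows "Gamma (shrink_V V X) (shrink_m m X) \<le> real k"
proof (rule Gamma_le)
  have "finite V" using multigraph_finite[OF mg] .
  then show "finite (shrink_V V X)" "3 \<le> card (shrink_V V X)"
    using two by (simp_all add: shrink_V_eq card_image)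
qed (rule tval_shrink_le[OF mg X Gamma sparse])

locale near_regular =
  fixes V :: "'a set" and m :: "'a \<Rightarrow> 'a \<Rightarrow> nat" and s :: 'a and d :: nat
  assumes multigraph: "multigraph V m"
    and even_order: "even (card V)"
    and s_in: "s \<in> V" and deg_s: "deg V m s \<le> d"
    and deg_others: "\<forall>v \<in> V - {s}. deg V m v = d \<or> deg V m v = d + 1"
begin

lemma finite_V: "finite V"
  using multigraph_finite[OF multigraph] .

lemma deg_le: "v \<in> V \<Longrightarrow> deg V m v \<le> d + 1"
  using deg_s deg_others by force

lemma deg_ge: "v \<in> V - {s} \<Longrightarrow> d \<le> deg V m v"
  using deg_others by force

lemma sum_deg_le: "T \<subseteq> V \<Longrightarrow> (\<Sum>u\<in>T. deg V m u) \<le> (d + 1) * card T"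
  using sum_bounded_above[of T "deg V m" "d + 1"] deg_le by (auto simp: mult.commute)

definition admissible :: "'a set \<Rightarrow> bool" where
  "admissible S \<longleftrightarrow> S \<subset> V - {s} \<and> odd (card S) \<and> 3 \<le> card S \<and> cut_size V m S \<le> d
    \<and> slack m S d \<le> slack m (V - {s}) d"

lemma three_le_card_if_cut_less:
  assumes W: "W \<subseteq> V - {s}" and "odd (card W)" and cut: "cut_size V m W < d"
  shows "3 \<le> card W"
proof (rule ccontr)
  assume "\<not> 3 \<le> card W"
  with \<open>odd (card W)\<close> have "card W = 1" by presburger
  then obtain w where "W = {w}" by (meson card_1_singletonE)
  with W cut show False
    using cut_size_singleton[OF multigraph] deg_ge by fastforce
qed

lemma admissibleI:
  assumes W: "W \<subset> V - {s}" and "odd (card W)" and cut: "cut_size V m W < d"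
    and "(d + 1) * card W + edges_between m (V - {s}) (V - {s})
      \<le> (d + 1) * card (V - {s}) + edges_between m W W"
  shows "admissible W"
proof -
  have "finite W" using W finite_V by (meson finite_Diff finite_subset psubset_imp_subset)
  then show ?thesis
    unfolding admissible_def
    using assms three_le_card_if_cut_less[of W] slack_le_slack_iff[OF multigraph] finite_V
    by auto
qed

lemma admissible_slack:
  assumes "admissible S"
  shows "(d + 1) * card S + edges_between m (V - {s}) (V - {s})
    \<le> (d + 1) * card (V - {s}) + edges_between m S S"
proof -
  have "finite S" using assms finite_V unfolding admissible_def
    by (meson finite_Diff finite_subset psubset_imp_subset)
  then show ?thesis
    using assms slack_le_slack_iff[OF multigraph] finite_V unfolding admissible_def by simp
qed

text \<open>Summing degrees over \<open>V - {s}\<close> and \<open>W\<close>: the edges leaving \<open>V - {s}\<close> are those at \<open>s\<close>, and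
  every vertex outside \<open>W\<close> contributes at most \<open>d + 1\<close>.\<close>

lemma slack_condition_if_cut_le_deg_s:
  assumes W: "W \<subseteq> V - {s}" and cut: "cut_size V m W \<le> deg V m s"
  shows "(d + 1) * card W + edges_between m (V - {s}) (V - {s})
    \<le> (d + 1) * card (V - {s}) + edges_between m W W"
proof -
  define Q where "Q = V - {s} - W"
  have fin: "finite W" "finite Q" using W finite_V unfolding Q_def by (auto intro: finite_subset)
  have split: "V - {s} = W \<union> Q" "W \<inter> Q = {}" using W unfolding Q_def by auto
  have card: "card (V - {s}) = card W + card Q"
    unfolding split(1) using fin split(2) by (rule card_Un_disjoint)
  have "(\<Sum>u\<in>V - {s}. deg V m u) = (\<Sum>u\<in>W. deg V m u) + (\<Sum>u\<in>Q. deg V m u)"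
    unfolding split(1) using fin split(2) by (rule sum.union_disjoint)
  moreover have "(\<Sum>u\<in>V - {s}. deg V m u) = edges_between m (V - {s}) (V - {s}) + deg V m s"
    using sum_deg_eq[OF multigraph, of "V - {s}"] s_in
      cut_size_complement[OF multigraph, of "{s}"] cut_size_singleton[OF multigraph s_in]
    by auto
  moreover have "(\<Sum>u\<in>W. deg V m u) = edges_between m W W + cut_size V m W"
    using sum_deg_eq[OF multigraph, of W] W by auto
  moreover have "(\<Sum>u\<in>Q. deg V m u) \<le> (d + 1) * card Q"
    by (rule sum_deg_le) (auto simp: Q_def)
  ultimately show ?thesis
    using cut card by (simp add: algebra_simps)
qed

lemma admissible_Un_smaller_cut:
  assumes S: "admissible S" and T: "T \<subseteq> V - S" "s \<notin> T" "even (card T)"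
    and dense: "(d + 1) * card T < edges_between m T T + 2 * edges_between m T S"
  shows "admissible (T \<union> S) \<and> cut_size V m (T \<union> S) < cut_size V m S"
proof -
  define W where "W = V - S - T"
  have SV: "S \<subseteq> V - {s}" "S \<subseteq> V" "cut_size V m S \<le> d" "odd (card S)"
    using S unfolding admissible_def by auto
  have part: "T \<inter> S = {}" "T \<inter> W = {}" "S \<inter> W = {}" "T \<union> S \<union> W = V"
    unfolding W_def using T SV by auto
  note cuts = cut_size_partition[OF multigraph part]
  have fin: "finite T" "finite S" using part(4) finite_V by (auto intro: finite_subset)
  have card: "card (T \<union> S) = card T + card S" using fin part(1) by (rule card_Un_disjoint)
  have "(\<Sum>u\<in>T. deg V m u) \<le> (d + 1) * card T" using sum_deg_le part(4) by auto
  then have smaller: "cut_size V m (T \<union> S) < cut_size V m S"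
    using cuts dense by linarith
  have slack_TS: "(d + 1) * card (T \<union> S) + edges_between m (V - {s}) (V - {s})
      < (d + 1) * card (V - {s}) + edges_between m (T \<union> S) (T \<union> S)"
    using admissible_slack[OF S] dense card
      edges_between_Un_self[OF multigraph_sym[OF multigraph] fin part(1)]
    by (simp add: algebra_simps)
  have "T \<union> S \<subset> V - {s}"
    using T SV slack_TS by auto
  moreover have "odd (card (T \<union> S))" using card T(3) SV(4) by simp
  ultimately have "admissible (T \<union> S)"
    using smaller SV(3) slack_TS by (intro admissibleI) auto
  with smaller show ?thesis by blast
qed

lemma admissible_complement_smaller_cut:
  assumes S: "admissible S" and T: "T \<subseteq> V - S" "s \<in> T" "even (card T)"
    and dense: "(d + 1) * card T < edges_between m T T + 2 * edges_between m T S"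
  shows "admissible (V - S - T) \<and> cut_size V m (V - S - T) < cut_size V m S"
proof -
  define W where "W = V - S - T"
  have SV: "S \<subseteq> V - {s}" "S \<subseteq> V" "cut_size V m S \<le> d" "odd (card S)" "3 \<le> card S"
    using S unfolding admissible_def by auto
  have part: "T \<inter> S = {}" "T \<inter> W = {}" "S \<inter> W = {}" "T \<union> S \<union> W = V"
    unfolding W_def using T SV by auto
  note cuts = cut_size_partition[OF multigraph part]
  have fin: "finite T" "finite S" "finite W" using part(4) finite_V by (auto intro: finite_subset)
  have "(\<Sum>u\<in>T. deg V m u) = deg V m s + (\<Sum>u\<in>T - {s}. deg V m u)"
    using T(2) fin(1) sum.remove by metis
  moreover have "(\<Sum>u\<in>T - {s}. deg V m u) \<le> (d + 1) * card (T - {s})"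
    using sum_deg_le part(4) by auto
  moreover have "card T = card (T - {s}) + 1" using card_Suc_Diff1[OF fin(1) T(2)] by simp
  ultimately have "(\<Sum>u\<in>T. deg V m u) + (d + 1) \<le> deg V m s + (d + 1) * card T"
    by (simp add: algebra_simps)
  then have cut_W: "cut_size V m W + 2 \<le> deg V m s" "cut_size V m W + 2 \<le> cut_size V m S"
    using cuts dense SV(3) deg_s by linarith+
  have W: "W \<subseteq> V - {s}" unfolding W_def using T(2) by auto
  have "W \<noteq> V - {s}"
  proof
    assume "W = V - {s}"
    with SV(1) part(3) have "S = {}" by blast
    with SV(5) show False by simp
  qed
  moreover have "card V = card T + card S + card W"
    using fin part by (metis card_Un_disjoint finite_Un Int_Un_distrib2 Un_empty)
  then have "odd (card W)" using even_order T(3) SV(4) by simp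
  ultimately have "admissible W"
    using W cut_W SV(3) slack_condition_if_cut_le_deg_s[OF W] by (intro admissibleI) auto
  with cut_W show ?thesis unfolding W_def by auto
qed

lemma admissible_Diff_smaller_cut:
  assumes S: "admissible S" and T: "T \<subseteq> S" "even (card T)"
    and dense: "(d + 1) * card T < edges_between m T T + 2 * edges_between m T (V - S)"
  shows "admissible (S - T) \<and> cut_size V m (S - T) < cut_size V m S"
proof -
  have SV: "S \<subset> V - {s}" "S \<subseteq> V" "cut_size V m S \<le> d" "odd (card S)"
    using S unfolding admissible_def by auto
  have part: "T \<inter> (S - T) = {}" "T \<inter> (V - S) = {}" "(S - T) \<inter> (V - S) = {}"
    "T \<union> (S - T) \<union> (V - S) = V"
    using T SV by auto
  note cuts = cut_size_partition[OF multigraph part]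
  have U: "T \<union> (S - T) = S" using T by auto
  have fin: "finite T" "finite (S - T)" using part(4) finite_V by (auto intro: finite_subset)
  have card: "card S = card T + card (S - T)"
    using card_Un_disjoint[OF fin part(1)] unfolding U .
  have "(\<Sum>u\<in>T. deg V m u) \<le> (d + 1) * card T" using sum_deg_le part(4) by auto
  then have smaller: "cut_size V m (S - T) < cut_size V m S"
    using cuts unfolding U using dense by linarith
  have "(d + 1) * card (S - T) + edges_between m (V - {s}) (V - {s})
      \<le> (d + 1) * card (V - {s}) + edges_between m (S - T) (S - T)"
    using admissible_slack[OF S]
      edges_between_Un_self[OF multigraph_sym[OF multigraph] fin part(1)]
      \<open>(\<Sum>u\<in>T. deg V m u) \<le> _\<close> cuts(4) dense card
    unfolding U
    by (simp add: algebra_simps)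
  moreover have "S - T \<subset> V - {s}" "odd (card (S - T))"
    using SV card T(2) by auto
  ultimately have "admissible (S - T)"
    using smaller SV(3) by (intro admissibleI) auto
  with smaller show ?thesis by blast
qed

lemma sparse_if_minimal_cut:
  assumes S: "admissible S" and min: "\<And>S'. admissible S' \<Longrightarrow> cut_size V m S \<le> cut_size V m S'"
  shows "\<And>T. T \<subseteq> V - S \<Longrightarrow> even (card T) \<Longrightarrow>
      edges_between m T T + 2 * edges_between m T S \<le> (d + 1) * card T"
    and "\<And>T. T \<subseteq> V - (V - S) \<Longrightarrow> even (card T) \<Longrightarrow>
      edges_between m T T + 2 * edges_between m T (V - S) \<le> (d + 1) * card T"
proof -
  fix T assume T: "T \<subseteq> V - S" "even (card T)"
  show "edges_between m T T + 2 * edges_between m T S \<le> (d + 1) * card T"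
  proof (rule ccontr)
    assume "\<not> ?thesis"
    then have dense: "(d + 1) * card T < edges_between m T T + 2 * edges_between m T S" by simp
    obtain S' where "admissible S'" "cut_size V m S' < cut_size V m S"
      using admissible_Un_smaller_cut[OF S T(1) _ T(2) dense]
        admissible_complement_smaller_cut[OF S T(1) _ T(2) dense] by (cases "s \<in> T") blast+
    with min show False by (meson not_le)
  qed
next
  fix T assume T: "T \<subseteq> V - (V - S)" "even (card T)"
  show "edges_between m T T + 2 * edges_between m T (V - S) \<le> (d + 1) * card T"
  proof (rule ccontr)
    assume "\<not> ?thesis"
    then have dense: "(d + 1) * card T < edges_between m T T + 2 * edges_between m T (V - S)" by simp
    have "T \<subseteq> S" using T(1) by blast
    from admissible_Diff_smaller_cut[OF S this T(2) dense] min show False by (meson not_le)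
  qed
qed

lemma shrink_bounds:
  assumes X: "X \<subseteq> V" and cut: "cut_size V m X \<le> d" and two: "2 \<le> card (V - X)"
    and Gamma: "Gamma V m \<le> real d + 1"
    and sparse: "\<And>T. T \<subseteq> V - X \<Longrightarrow> even (card T) \<Longrightarrow>
      edges_between m T T + 2 * edges_between m T X \<le> (d + 1) * card T"
  shows "maxdeg (shrink_V V X) (shrink_m m X) \<le> d + 1
    \<and> Gamma (shrink_V V X) (shrink_m m X) \<le> real d + 1
    \<and> num_deg (shrink_V V X) (shrink_m m X) (d + 1) \<le> num_deg V m (d + 1)"
proof -
  have "Gamma V m \<le> real (d + 1)" using Gamma by simp
  from Gamma_shrink_le[OF multigraph X two this sparse]
  have "Gamma (shrink_V V X) (shrink_m m X) \<le> real d + 1" by simp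
  moreover have "cut_size V m X \<le> d + 1" "cut_size V m X \<noteq> d + 1" using cut by simp_all
  ultimately show ?thesis
    using maxdeg_shrink_le[OF multigraph X _ deg_le] num_deg_shrink_le[OF multigraph X] by blast
qed

end

theorem mainTheorem8:
  fixes V :: "'a set" and m :: "'a \<Rightarrow> 'a \<Rightarrow> nat" and s :: 'a and d r :: nat
  assumes mg: "multigraph V m"
    and p_even: "even (card V)" and p_ge: "card V \<ge> 4"
    and d_ge: "d \<ge> 2"
    and s_in: "s \<in> V" and deg_s: "deg V m s \<le> d"
    and deg_others: "\<forall>v \<in> V - {s}. deg V m v = d \<or> deg V m v = d + 1"
    and r_def: "num_deg V m (d + 1) = r" and r_le: "r \<le> d"
    and R_ex: "\<exists>R. R \<subset> V - {s} \<and> odd (card R) \<and> card R \<ge> 3 \<and> cut_size V m R \<le> d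
                 \<and> slack m R d \<le> slack m (V - {s}) d"
    and Gamma_le: "Gamma V m \<le> real d + 1"
  shows "\<exists>S. S \<subseteq> V \<and> odd (card S) \<and> 1 < card S \<and> card S < card V - 1
           \<and> maxdeg (shrink_V V S) (shrink_m m S) \<le> d + 1
           \<and> Gamma (shrink_V V S) (shrink_m m S) \<le> real d + 1
           \<and> num_deg (shrink_V V S) (shrink_m m S) (d + 1) \<le> r
           \<and> maxdeg (shrink_V V (V - S)) (shrink_m m (V - S)) \<le> d + 1
           \<and> Gamma (shrink_V V (V - S)) (shrink_m m (V - S)) \<le> real d + 1
           \<and> num_deg (shrink_V V (V - S)) (shrink_m m (V - S)) (d + 1) \<le> r"
proof -
  interpret near_regular V m s d
    using assms by unfold_locales
  obtain R where "admissible R"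
    using R_ex unfolding admissible_def by blast
  then obtain S where S: "admissible S"
    and min: "\<And>S'. admissible S' \<Longrightarrow> cut_size V m S \<le> cut_size V m S'"
    using ex_has_least_nat[of admissible R "cut_size V m"] by blast
  have SV: "S \<subseteq> V" and cut: "cut_size V m S \<le> d" and "odd (card S)" "3 \<le> card S"
    and small: "card S < card V - 1"
    using S s_in finite_V psubset_card_mono[of "V - {s}" S] unfolding admissible_def by auto
  have "card (V - S) = card V - card S"
    using SV finite_V by (meson card_Diff_subset finite_subset)
  then have "2 \<le> card (V - S)" "2 \<le> card (V - (V - S))"
    using small \<open>3 \<le> card S\<close> SV by (auto simp: double_diff)
  moreover have "cut_size V m (V - S) \<le> d"
    using cut cut_size_complement[OF mg SV] by simp
  ultimately have "maxdeg (shrink_V V S) (shrink_m m S) \<le> d + 1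
      \<and> Gamma (shrink_V V S) (shrink_m m S) \<le> real d + 1
      \<and> num_deg (shrink_V V S) (shrink_m m S) (d + 1) \<le> r"
    "maxdeg (shrink_V V (V - S)) (shrink_m m (V - S)) \<le> d + 1
      \<and> Gamma (shrink_V V (V - S)) (shrink_m m (V - S)) \<le> real d + 1
      \<and> num_deg (shrink_V V (V - S)) (shrink_m m (V - S)) (d + 1) \<le> r"
    using shrink_bounds[OF SV cut _ Gamma_le sparse_if_minimal_cut(1)[OF S min]]
      shrink_bounds[OF Diff_subset _ _ Gamma_le sparse_if_minimal_cut(2)[OF S min]] r_def
    by simp_all
  with SV \<open>odd (card S)\<close> \<open>3 \<le> card S\<close> small show ?thesis by auto
qed

end
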